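(* Let $\phi:\mathbb{R}^d\to\mathbb{R}^d$ be a bi-Lipschitz homeomorphism preserving Lebesgue measure, and let $\beta\in L^\infty(\mathbb{R}^+\times\mathbb{R}^d)$ be such that $\mu=\mu_\beta$ is a Carleson measure, i.e. $\|\mu\|_{\mathcal C}<\infty$. Then $\mu^{\sharp\phi}$ is a Carleson measure and $$\|\mu^{\sharp\phi}\|_{\mathcal C}\le C\left(\|\mu\|_{\mathcal C}+\log(K_\phi)\,\|\beta\|^2_{L^\infty(\mathbb{R}^+\times\mathbb{R}^d)}\right),$$ where $C$ depends only on the dimension $d$.
   Context: For a bi-Lipschitz homeomorphism $\phi$ of $\mathbb{R}^d$, $K_\phi:=\sup_{x\neq y}\left(\frac{|\phi(x)-\phi(y)|}{|x-y|}+\frac{|x-y|}{|\phi(x)-\phi(y)|}\right)$; "preserving Lebesgue measure" means $|\phi(A)|=|A|$ for all measurable $A$. For a ball $B\subset\mathbb{R}^d$ of radius $r_B$, its Carleson box is $T(B)=\{(t,x):x\in B,\ 0<t\le r_B\}$. For a measure $\mu$ on $\mathbb{R}^+\times\mathbb{R}^d$, $\|\mu\|_{\mathcal C}=\sup_B |B|^{-1}\mu(T(B))$ (supremum over balls of $\mathbb{R}^d$); $\mu$ is a Carleson measure if this is finite. For a measurable $\beta:\mathbb{R}^+\times\mathbb{R}^d\to\mathbb{R}$, $\mu_\beta$ is the measure $d\mu_\beta(t,x)=|\beta(t,x)|^2\,\frac{dt\,dx}{t}$. The pull-back $\mu^{\sharp\phi}$ is defined by $\mu^{\sharp\phi}(I\times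 A)=\mu(I\times\phi^{-1}(A))$ for intervals $I\subset\mathbb{R}^+$ and measurable $A\subset\mathbb{R}^d$; for $\mu=\mu_\beta$ one has $d\mu^{\sharp\phi}(t,x)=|\beta(t,\phi(x))|^2\frac{dt\,dx}{t}$. *)

theory Defs
  imports "HOL-Analysis.Analysis" "HOL-Probability.Essential_Supremum"
begin

definition K_const :: "('a::euclidean_space \<Rightarrow> 'a) \<Rightarrow> real" where
  "K_const \<phi> = (SUP p \<in> {(x,y). x \<noteq> y}.
      dist (\<phi> (fst p)) (\<phi> (snd p)) / dist (fst p) (snd p)
    + dist (fst p) (snd p) / dist (\<phi> (fst p)) (\<phi> (snd p)))"

definition bi_lipschitz_homeo :: "('a::euclidean_space \<Rightarrow> 'a) \<Rightarrow> bool" where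
  "bi_lipschitz_homeo \<phi> \<longleftrightarrow> bij \<phi> \<and> continuous_on UNIV \<phi> \<and> continuous_on UNIV (inv \<phi>) \<and>
     (\<exists>L>0. \<forall>x y. dist (\<phi> x) (\<phi> y) \<le> L * dist x y \<and> dist x y \<le> L * dist (\<phi> x) (\<phi> y))"

definition preserves_lebesgue :: "('a::euclidean_space \<Rightarrow> 'a) \<Rightarrow> bool" where
  "preserves_lebesgue \<phi> \<longleftrightarrow> (\<forall>A \<in> sets lebesgue.
      \<phi> ` A \<in> sets lebesgue \<and> emeasure lebesgue (\<phi> ` A) = emeasure lebesgue A)"

definition upper_half :: "(real \<times> 'a::euclidean_space) measure" where
  "upper_half = restrict_space (lborel \<Otimes>\<^sub>M lborel) ({0<..} \<times> UNIV)"

definition Linfty :: "(real \<Rightarrow> 'a::euclidean_space \<Rightarrow> real) \<Rightarrow> bool" where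
  "Linfty \<beta> \<longleftrightarrow> (\<lambda>(t,x). \<beta> t x) \<in> borel_measurable upper_half \<and>
      esssup upper_half (\<lambda>(t,x). ereal \<bar>\<beta> t x\<bar>) < \<infinity>"

definition Linfty_norm :: "(real \<Rightarrow> 'a::euclidean_space \<Rightarrow> real) \<Rightarrow> real" where
  "Linfty_norm \<beta> = real_of_ereal (esssup upper_half (\<lambda>(t,x). ereal \<bar>\<beta> t x\<bar>))"

definition mu_beta :: "(real \<Rightarrow> 'a::euclidean_space \<Rightarrow> real) \<Rightarrow> (real \<times> 'a) measure" where
  "mu_beta \<beta> = density upper_half (\<lambda>(t,x). ennreal ((\<beta> t x)\<^sup>2 / t))"

definition carleson_box :: "'a::euclidean_space \<Rightarrow> real \<Rightarrow> (real \<times> 'a) set" where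
  "carleson_box x r = {(t,y). y \<in> ball x r \<and> 0 < t \<and> t \<le> r}"

definition carleson_norm :: "(real \<times> 'a::euclidean_space) measure \<Rightarrow> ennreal" where
  "carleson_norm \<mu> = (SUP p \<in> {p. snd p > (0::real)}.
      emeasure \<mu> (carleson_box (fst p) (snd p)) / emeasure lborel (ball (fst p) (snd p)))"

definition is_carleson :: "(real \<times> 'a::euclidean_space) measure \<Rightarrow> bool" where
  "is_carleson \<mu> \<longleftrightarrow> carleson_norm \<mu> < \<infinity>"

definition pullback :: "(real \<times> 'a::euclidean_space) measure \<Rightarrow> ('a \<Rightarrow> 'a) \<Rightarrow> (real \<times> 'a) measure" where
  "pullback \<mu> \<phi> = distr \<mu> upper_half (\<lambda>(t,x). (t, \<phi> x))"

end

theory Submission imports Defs begin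

text \<open>
  The mass of the pulled-back Carleson box T(B(x0,r)) is the \<mu>-mass of the set of (t,y) with
  \<phi> y \<in> B(x0,r) and t \<le> r. Split it according to the distance of \<phi> y to the boundary of the ball.
  Where this distance is at most 4 K t, the measure-preserving property of \<phi> lets us bound the
  slice at height t by the measure of an annulus of width 4 K t, so that the L^\<infinity> bound on \<beta>
  and \<integral> dt/t over [r/(4dK), r] produce the term \<parallel>\<beta>\<parallel>^2 log K |B|.
  Elsewhere h y = (r - |x0 - \<phi> y|)/K is 1-Lipschitz and 4t < h y; every such point lies in the
  boxes T(B(z, h z/3)) for a set of centres z of measure comparable to h(y)^d, so averaging
  these boxes over z \<in> \<phi>^-1(B(x0,r)) bounds this part by a multiple of \<parallel>\<mu>\<parallel>_C |B|.
\<close>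

subsection \<open>The constant K_\<phi>\<close>

lemma bi_lipschitz_ratio_sum_le_K_const:
  fixes \<phi> :: "'a::euclidean_space \<Rightarrow> 'a"
  assumes bl: "bi_lipschitz_homeo \<phi>" and "x \<noteq> y"
  shows "dist (\<phi> x) (\<phi> y) / dist x y + dist x y / dist (\<phi> x) (\<phi> y) \<le> K_const \<phi>"
proof -
  from bl obtain L where L: "\<And>x y. dist (\<phi> x) (\<phi> y) \<le> L * dist x y"
    "\<And>x y. dist x y \<le> L * dist (\<phi> x) (\<phi> y)" and bij: "bij \<phi>"
    unfolding bi_lipschitz_homeo_def by blast
  define g where "g = (\<lambda>p::'a\<times>'a. dist (\<phi> (fst p)) (\<phi> (snd p)) / dist (fst p) (snd p)
    + dist (fst p) (snd p) / dist (\<phi> (fst p)) (\<phi> (snd p)))"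
  have "g p \<le> 2 * L" if hp: "p \<in> {(x,y). x \<noteq> y}" for p
  proof -
    obtain u v where p: "p = (u,v)" "u \<noteq> v" using hp by (cases p) auto
    moreover have "\<phi> u \<noteq> \<phi> v" using bij p(2) by (metis bij_def injD)
    ultimately have "dist u v > 0" "dist (\<phi> u) (\<phi> v) > 0" by simp_all
    then have "dist (\<phi> u) (\<phi> v) / dist u v \<le> L" "dist u v / dist (\<phi> u) (\<phi> v) \<le> L"
      using L[of u v] by (simp_all add: divide_le_eq)
    then show ?thesis unfolding g_def p by simp
  qed
  then have "bdd_above (g ` {(x,y). x \<noteq> y})" by (intro bdd_aboveI2)
  from cSUP_upper[OF _ this, of "(x,y)"] show ?thesis
    using \<open>x \<noteq> y\<close> unfolding K_const_def g_def by simp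
qed

lemma dist_le_K_const:
  fixes \<phi> :: "'a::euclidean_space \<Rightarrow> 'a"
  assumes "bi_lipschitz_homeo \<phi>"
  shows "dist (\<phi> x) (\<phi> y) \<le> K_const \<phi> * dist x y"
proof (cases "x = y")
  case False
  have "dist (\<phi> x) (\<phi> y) / dist x y \<le> K_const \<phi>"
    using bi_lipschitz_ratio_sum_le_K_const[OF assms False]
      divide_nonneg_nonneg[OF zero_le_dist zero_le_dist, of x y "\<phi> x" "\<phi> y"] by linarith
  with False show ?thesis by (simp add: divide_le_eq mult.commute)
qed simp

lemma K_const_ge_two:
  fixes \<phi> :: "'a::euclidean_space \<Rightarrow> 'a"
  assumes bl: "bi_lipschitz_homeo \<phi>"
  shows "K_const \<phi> \<ge> 2"
proof -
  obtain e :: 'a where e: "e \<in> Basis" using nonempty_Basis by blast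
  then have "e \<noteq> 0" by (auto simp: nonzero_Basis)
  have "inj \<phi>" using bl unfolding bi_lipschitz_homeo_def bij_def by blast
  define a where "a = dist (\<phi> e) (\<phi> 0) / dist e 0"
  have "\<phi> e \<noteq> \<phi> 0" using \<open>e \<noteq> 0\<close> \<open>inj \<phi>\<close> by (meson injD)
  with \<open>e \<noteq> 0\<close> have "a > 0" unfolding a_def by simp
  have "2 * a \<le> a * a + 1" using sum_power2_ge_zero[of "a - 1" 0]
    by (simp add: power2_eq_square algebra_simps)
  then have "2 \<le> a + 1 / a" using \<open>a > 0\<close> by (simp add: field_simps)
  also have "a + 1 / a \<le> K_const \<phi>"
    using bi_lipschitz_ratio_sum_le_K_const[OF bl \<open>e \<noteq> 0\<close>] by (simp add: a_def)
  finally show ?thesis .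
qed

lemma one_le_four_DIM_K_const:
  fixes \<phi> :: "'a::euclidean_space \<Rightarrow> 'a"
  assumes "bi_lipschitz_homeo \<phi>"
  shows "1 \<le> 4 * real DIM('a) * K_const \<phi>"
proof -
  have "1 * 1 \<le> real DIM('a) * K_const \<phi>"
    using K_const_ge_two[OF assms] by (intro mult_mono) (auto simp: DIM_positive Suc_le_eq)
  then show ?thesis by simp
qed

subsection \<open>The measure \<mu>_\<beta> as a density on the whole space\<close>

lemma fst_borel_measurable[measurable]:
  "(fst :: 'a::topological_space \<times> 'b::topological_space \<Rightarrow> 'a) \<in> borel_measurable borel"
  by (intro borel_measurable_continuous_onI continuous_intros)

lemma ball_sets_borel[measurable]: "ball (x::'a::euclidean_space) r \<in> sets borel"
  by simp

lemma ident_lborel_pair_measure[measurable]: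
  "(\<lambda>x. x) \<in> measurable (lborel :: ('a::euclidean_space \<times> 'b::euclidean_space) measure)
    (borel \<Otimes>\<^sub>M borel)"
  by (rule measurable_ident_sets) (metis borel_prod sets_lborel)

definition upper_half_space :: "(real \<times> 'a::euclidean_space) set" where
  "upper_half_space = {0<..} \<times> UNIV"

lemma upper_half_eq: "upper_half = restrict_space lborel upper_half_space"
  by (simp add: upper_half_def upper_half_space_def lborel_prod)

lemma upper_half_space_sets[measurable]: "upper_half_space \<in> sets borel"
  unfolding upper_half_space_def by (intro borel_open open_Times) auto

definition mu_beta_density :: "(real \<Rightarrow> 'a::euclidean_space \<Rightarrow> real) \<Rightarrow> real \<times> 'a \<Rightarrow> ennreal" where
  "mu_beta_density \<beta> p = ennreal ((\<beta> (fst p) (snd p))\<^sup>2 / fst p) * indicator upper_half_space p"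

lemma Linfty_borel_measurable:
  assumes "Linfty \<beta>"
  shows "(\<lambda>p. if p \<in> upper_half_space then \<beta> (fst p) (snd p) else 0) \<in> borel_measurable lborel"
proof -
  have "(\<lambda>(t,x). \<beta> t x) \<in> borel_measurable (restrict_space lborel upper_half_space)"
    using assms unfolding Linfty_def upper_half_eq by simp
  then have "(\<lambda>p. if p \<in> upper_half_space then (\<lambda>(t,x). \<beta> t x) p else 0) \<in> borel_measurable lborel"
    by (subst (asm) measurable_restrict_space_iff) auto
  also have "(\<lambda>p. if p \<in> upper_half_space then (\<lambda>(t,x). \<beta> t x) p else 0)
      = (\<lambda>p. if p \<in> upper_half_space then \<beta> (fst p) (snd p) else 0)"
    by (auto simp: fun_eq_iff split: prod.splits)
  finally show ?thesis .
qed

lemma mu_beta_density_measurable[measurable]: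
  assumes "Linfty \<beta>"
  shows "mu_beta_density \<beta> \<in> borel_measurable lborel"
proof -
  note [measurable] = Linfty_borel_measurable[OF assms]
  have "(\<lambda>p. ennreal ((if p \<in> upper_half_space then \<beta> (fst p) (snd p) else 0)\<^sup>2 / fst p)
      * indicator upper_half_space p) \<in> borel_measurable lborel" by measurable
  also have "(\<lambda>p. ennreal ((if p \<in> upper_half_space then \<beta> (fst p) (snd p) else 0)\<^sup>2 / fst p)
      * indicator upper_half_space p) = mu_beta_density \<beta>"
    by (auto simp: mu_beta_density_def fun_eq_iff indicator_def)
  finally show ?thesis .
qed

lemma emeasure_mu_beta:
  assumes lb: "Linfty \<beta>" and A: "A \<in> sets lborel"
  shows "emeasure (mu_beta \<beta>) (A \<inter> upper_half_space)
    = (\<integral>\<^sup>+p. mu_beta_density \<beta> p * indicator A p \<partial>lborel)"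
proof -
  have "(\<lambda>p. \<beta> (fst p) (snd p)) \<in> borel_measurable (restrict_space lborel upper_half_space)"
    using lb unfolding Linfty_def upper_half_eq by (simp add: case_prod_unfold)
  moreover have "fst \<in> borel_measurable (restrict_space lborel upper_half_space)"
    by (rule measurable_restrict_space1) simp
  ultimately have "(\<lambda>p. ennreal ((\<beta> (fst p) (snd p))\<^sup>2 / fst p))
      \<in> borel_measurable (restrict_space lborel upper_half_space)" by measurable
  then have dm: "(\<lambda>(t,x). ennreal ((\<beta> t x)\<^sup>2 / t))
      \<in> borel_measurable (restrict_space lborel upper_half_space)"
    by (simp add: case_prod_beta')
  have "A \<inter> upper_half_space \<in> sets (restrict_space lborel upper_half_space)"
    using A by (subst sets_restrict_space_iff) auto
  from emeasure_density[OF dm this]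
  have "emeasure (mu_beta \<beta>) (A \<inter> upper_half_space) = (\<integral>\<^sup>+p. (\<lambda>(t,x). ennreal ((\<beta> t x)\<^sup>2 / t)) p
      * indicator (A \<inter> upper_half_space) p \<partial>restrict_space lborel upper_half_space)"
    unfolding mu_beta_def upper_half_eq .
  also have "\<dots> = (\<integral>\<^sup>+p. (\<lambda>(t,x). ennreal ((\<beta> t x)\<^sup>2 / t)) p
      * indicator (A \<inter> upper_half_space) p * indicator upper_half_space p \<partial>lborel)"
    by (rule nn_integral_restrict_space) simp
  also have "\<dots> = (\<integral>\<^sup>+p. mu_beta_density \<beta> p * indicator A p \<partial>lborel)"
    by (rule nn_integral_cong) (auto simp: mu_beta_density_def indicator_def split: prod.splits)
  finally show ?thesis .
qed

lemma mu_beta_density_le_Linfty_norm: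
  assumes "Linfty \<beta>"
  shows "AE p in lborel. mu_beta_density \<beta> p
    \<le> ennreal ((Linfty_norm \<beta>)\<^sup>2 / fst p) * indicator upper_half_space p"
proof -
  let ?e = "esssup upper_half (\<lambda>(t,x). ereal \<bar>\<beta> t x\<bar>)"
  have fin: "?e < \<infinity>" using assms unfolding Linfty_def by simp
  have "AE p in restrict_space lborel upper_half_space. (\<lambda>(t,x). ereal \<bar>\<beta> t x\<bar>) p \<le> ?e"
    using esssup_AE[of "\<lambda>(t,x). ereal \<bar>\<beta> t x\<bar>" upper_half] unfolding upper_half_eq by simp
  then have "AE p in restrict_space lborel upper_half_space. \<bar>\<beta> (fst p) (snd p)\<bar> \<le> Linfty_norm \<beta>"
  proof eventually_elim
    case (elim p)
    then have "ereal \<bar>\<beta> (fst p) (snd p)\<bar> \<le> ?e" by (simp add: split_beta)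
    with fin show ?case by (cases ?e) (auto simp: Linfty_norm_def)
  qed
  then have "AE p in lborel. p \<in> upper_half_space \<longrightarrow> \<bar>\<beta> (fst p) (snd p)\<bar> \<le> Linfty_norm \<beta>"
    by (subst (asm) AE_restrict_space_iff) auto
  then show ?thesis
  proof eventually_elim
    case (elim p)
    show ?case
    proof (cases "p \<in> upper_half_space")
      case True
      then have "fst p > 0" by (simp add: upper_half_space_def mem_Times_iff)
      have "(\<beta> (fst p) (snd p))\<^sup>2 \<le> (Linfty_norm \<beta>)\<^sup>2"
        using elim True abs_le_square_iff by force
      then have "(\<beta> (fst p) (snd p))\<^sup>2 / fst p \<le> (Linfty_norm \<beta>)\<^sup>2 / fst p"
        using \<open>fst p > 0\<close> by (simp add: divide_right_mono)
      then show ?thesis unfolding mu_beta_density_def using True by (simp add: ennreal_leI)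
    qed (simp add: mu_beta_density_def)
  qed
qed

lemma nn_integral_mu_beta_density_le:
  assumes "Linfty \<beta>"
  shows "(\<integral>\<^sup>+p. mu_beta_density \<beta> p * indicator A p \<partial>lborel)
    \<le> (\<integral>\<^sup>+p. ennreal ((Linfty_norm \<beta>)\<^sup>2 / fst p) * indicator (A \<inter> upper_half_space) p \<partial>lborel)"
  using mu_beta_density_le_Linfty_norm[OF assms]
proof (intro nn_integral_mono_AE, eventually_elim)
  case (elim p)
  have "mu_beta_density \<beta> p \<le> ennreal ((Linfty_norm \<beta>)\<^sup>2 / fst p) * indicator upper_half_space p"
    using elim by simp
  then have "mu_beta_density \<beta> p * indicator A p
      \<le> ennreal ((Linfty_norm \<beta>)\<^sup>2 / fst p) * indicator upper_half_space p * indicator A p"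
    by (rule mult_right_mono) simp
  then show ?case by (simp add: indicator_inter_arith mult_ac)
qed

subsection \<open>Boxes and the pull-back\<close>

lemma bi_lipschitz_borel_measurable:
  "bi_lipschitz_homeo \<phi> \<Longrightarrow> \<phi> \<in> borel_measurable borel"
  unfolding bi_lipschitz_homeo_def by (intro borel_measurable_continuous_onI) blast

lemma emeasure_lborel_vimage:
  fixes \<phi> :: "'a::euclidean_space \<Rightarrow> 'a"
  assumes bl: "bi_lipschitz_homeo \<phi>" and pl: "preserves_lebesgue \<phi>" and S: "S \<in> sets borel"
  shows "emeasure lborel (\<phi> -` S) = emeasure lborel S"
proof -
  have m: "\<phi> -` S \<in> sets borel"
    using measurable_sets_borel[OF bi_lipschitz_borel_measurable[OF bl] S] .
  have "\<phi> ` (\<phi> -` S) = S"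
    using bl unfolding bi_lipschitz_homeo_def bij_def by (simp add: surj_image_vimage_eq)
  then have "emeasure lebesgue S = emeasure lebesgue (\<phi> -` S)"
    using pl m unfolding preserves_lebesgue_def by (metis sets_lborel sets_completionI_sets)
  with S m show ?thesis by (simp add: emeasure_completion)
qed

lemma mem_carleson_box: "p \<in> carleson_box x r \<longleftrightarrow> dist x (snd p) < r \<and> 0 < fst p \<and> fst p \<le> r"
  by (cases p) (simp add: carleson_box_def dist_commute)

lemma carleson_box_subset_upper_half_space: "carleson_box x r \<subseteq> upper_half_space"
  by (auto simp: carleson_box_def upper_half_space_def)

lemma carleson_box_sets[measurable]: "carleson_box x r \<in> sets lborel"
proof -
  have "carleson_box x r = {0<..r} \<times> ball x r" unfolding carleson_box_def by auto
  also have "\<dots> \<in> sets (lborel \<Otimes>\<^sub>M lborel)" by (intro pair_measureI) auto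
  finally show ?thesis by (metis lborel_prod)
qed

lemma emeasure_pullback_carleson_box:
  fixes \<phi> :: "'a::euclidean_space \<Rightarrow> 'a"
  assumes bl: "bi_lipschitz_homeo \<phi>"
  shows "emeasure (pullback (mu_beta \<beta>) \<phi>) (carleson_box x0 r)
    = emeasure (mu_beta \<beta>) ({p. \<phi> (snd p) \<in> ball x0 r \<and> fst p \<le> r} \<inter> upper_half_space)"
proof -
  let ?P = "\<lambda>(t::real, x::'a). (t, \<phi> x)"
  have "?P \<in> borel_measurable borel"
    using bi_lipschitz_borel_measurable[OF bl] by measurable
  then have "?P \<in> measurable (restrict_space lborel upper_half_space)
      (restrict_space lborel upper_half_space)"
    by (intro measurable_restrict_space3) (auto simp: upper_half_space_def)
  then have Pm: "?P \<in> measurable (mu_beta \<beta>) upper_half"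
    unfolding mu_beta_def upper_half_eq
    by (subst measurable_cong_sets[OF sets_density refl])
  have "carleson_box x0 r \<in> sets upper_half"
    unfolding upper_half_eq
    using carleson_box_sets[of x0 r] carleson_box_subset_upper_half_space[of x0 r]
    by (subst sets_restrict_space_iff) auto
  moreover have "space (mu_beta \<beta>) = upper_half_space"
    by (simp add: mu_beta_def upper_half_eq space_restrict_space)
  ultimately show ?thesis unfolding pullback_def
    by (subst emeasure_distr[OF Pm])
      (auto simp: carleson_box_def upper_half_space_def intro!: arg_cong[where f="emeasure _"])
qed

lemma emeasure_carleson_box_le:
  fixes \<mu> :: "(real \<times> 'a::euclidean_space) measure"
  assumes "r > 0"
  shows "emeasure \<mu> (carleson_box z r)
    \<le> carleson_norm \<mu> * ennreal (unit_ball_vol DIM('a) * r ^ DIM('a))"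
proof -
  let ?v = "ennreal (unit_ball_vol DIM('a) * r ^ DIM('a))"
  have "unit_ball_vol (real DIM('a)) * r ^ DIM('a) > 0"
    using assms unit_ball_vol_pos[of "real DIM('a)"] by simp
  then have v: "?v \<noteq> 0" "?v \<noteq> \<infinity>" by (metis ennreal_eq_0_iff not_le) simp
  have "emeasure \<mu> (carleson_box z r) / ?v \<le> carleson_norm \<mu>"
    unfolding carleson_norm_def using assms by (intro SUP_upper2[of "(z,r)"]) (auto simp: emeasure_ball)
  then have "emeasure \<mu> (carleson_box z r) / ?v * ?v \<le> carleson_norm \<mu> * ?v"
    by (rule mult_right_mono) simp
  with v show ?thesis by (simp add: ennreal_divide_times)
qed

subsection \<open>The boundary layer\<close>

lemma emeasure_annulus_le:
  fixes x0 :: "'a::euclidean_space" and r \<rho> :: real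
  assumes r: "r > 0" and \<rho>: "0 \<le> \<rho>" "\<rho> \<le> r"
  shows "emeasure lborel {x. dist x0 x < r \<and> \<rho> \<le> dist x0 x}
     \<le> ennreal (unit_ball_vol DIM('a) * r ^ DIM('a) * (DIM('a) * (r - \<rho>) / r))"
proof -
  let ?w = "unit_ball_vol (real DIM('a))" and ?n = "DIM('a)"
  have w: "?w > 0" by (rule unit_ball_vol_pos) simp
  have "1 + real ?n * (\<rho>/r - 1) \<le> (1 + (\<rho>/r - 1)) ^ ?n"
    using r \<rho> by (intro Bernoulli_inequality) (simp add: field_simps)
  then have "r ^ ?n - \<rho> ^ ?n \<le> r ^ ?n * (?n * (r - \<rho>) / r)"
    using r by (simp add: power_divide field_simps)
  then have "?w * (r ^ ?n - \<rho> ^ ?n) \<le> ?w * (r ^ ?n * (?n * (r - \<rho>) / r))"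
    using w by (intro mult_left_mono) auto
  then have bernoulli: "?w * r ^ ?n - ?w * \<rho> ^ ?n \<le> ?w * r ^ ?n * (?n * (r - \<rho>) / r)"
    by (simp add: algebra_simps)
  have "{x. dist x0 x < r \<and> \<rho> \<le> dist x0 x} = ball x0 r - ball x0 \<rho>" by auto
  then have "emeasure lborel {x. dist x0 x < r \<and> \<rho> \<le> dist x0 x}
      = emeasure lborel (ball x0 r) - emeasure lborel (ball x0 \<rho>)"
    using \<rho> emeasure_lborel_ball_finite[of x0 \<rho>] by (auto intro: emeasure_Diff)
  also have "\<dots> = ennreal (?w * r ^ ?n - ?w * \<rho> ^ ?n)"
    using r \<rho> w by (simp add: emeasure_ball ennreal_minus)
  also have "\<dots> \<le> ennreal (?w * r ^ ?n * (?n * (r - \<rho>) / r))"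
    using bernoulli by (rule ennreal_leI)
  finally show ?thesis .
qed

text \<open>An upper bound for t^-1 |annulus of width c t/d| / |B(x0,r)|; its integral produces the log.\<close>

definition log_profile :: "real \<Rightarrow> real \<Rightarrow> real \<Rightarrow> ennreal" where
  "log_profile c r t = ennreal (c / r) * indicator {0<..r/c} t + ennreal (1/t) * indicator {r/c..r} t"

lemma log_profile_measurable[measurable]: "log_profile c r \<in> borel_measurable borel"
  unfolding log_profile_def[abs_def] by measurable

lemma nn_integral_inverse:
  assumes "0 < a" "a \<le> r"
  shows "(\<integral>\<^sup>+t. ennreal (1/t) * indicator {a..r} t \<partial>lborel) = ennreal (ln r - ln a)"
proof -
  have "((\<lambda>t. 1/t) has_integral (ln r - ln a)) {a..r}"
  proof (rule fundamental_theorem_of_calculus[OF assms(2)])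
    fix x assume "x \<in> {a..r}"
    with assms have "(ln has_real_derivative 1/x) (at x within {a..r})"
      by (auto intro!: derivative_eq_intros)
    then show "(ln has_vector_derivative 1/x) (at x within {a..r})"
      by (simp add: has_real_derivative_iff_has_vector_derivative)
  qed
  with assms show ?thesis by (intro nn_integral_has_integral_lebesgue') auto
qed

lemma nn_integral_log_profile:
  assumes r: "r > 0" and c: "c \<ge> 1"
  shows "(\<integral>\<^sup>+t. log_profile c r t \<partial>lborel) = ennreal (1 + ln c)"
proof -
  have a: "0 < r / c" "r / c \<le> r" using r c by (auto simp: divide_le_eq)
  have "(\<integral>\<^sup>+t. log_profile c r t \<partial>lborel)
      = ennreal (c / r) * ennreal (r / c) + ennreal (ln r - ln (r / c))"
    unfolding log_profile_def using a
    by (subst nn_integral_add) (auto simp: nn_integral_cmult_indicator nn_integral_inverse)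
  also have "\<dots> = ennreal 1 + ennreal (ln c)"
    using r c by (simp add: ennreal_mult'[symmetric] ln_div)
  also have "\<dots> = ennreal (1 + ln c)" using c by (simp add: ennreal_plus)
  finally show ?thesis .
qed

lemma annulus_over_height_le_log_profile:
  fixes x0 :: "'a::euclidean_space" and c r t :: real
  assumes t: "0 < t" "t \<le> r" and c: "c > 0"
  shows "ennreal (1/t) * emeasure lborel {x. dist x0 x < r \<and> r - c * t / DIM('a) \<le> dist x0 x}
    \<le> ennreal (unit_ball_vol DIM('a) * r ^ DIM('a)) * log_profile c r t"
    (is "_ * emeasure lborel ?S \<le> ennreal ?w * _")
proof -
  let ?d = "real DIM('a)"
  have d: "?d \<ge> 1" by (simp add: DIM_positive Suc_le_eq)
  have w: "?w > 0" using t unit_ball_vol_pos[of ?d] by simp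
  show ?thesis
  proof (cases "t \<le> r / c")
    case True
    then have "c * t \<le> r" using c by (simp add: pos_le_divide_eq mult.commute)
    also have "r \<le> r * ?d" using d t by simp
    finally have "0 \<le> r - c * t / ?d" using d by (simp add: pos_divide_le_eq)
    moreover have "r - c * t / ?d \<le> r" using c t by simp
    ultimately have "emeasure lborel ?S \<le> ennreal (?w * (?d * (r - (r - c * t / ?d)) / r))"
      using emeasure_annulus_le[of r "r - c * t / ?d" x0] t by linarith
    also have "?w * (?d * (r - (r - c * t / ?d)) / r) = t * (?w * (c / r))"
      using d by (simp add: field_simps)
    finally have "ennreal (1/t) * emeasure lborel ?S \<le> ennreal (1/t) * ennreal (t * (?w * (c / r)))"
      by (rule mult_left_mono) simp
    also have "\<dots> = ennreal (?w * (c / r))"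
      using t c w by (simp add: ennreal_mult'[symmetric])
    also have "\<dots> = ennreal ?w * ennreal (c / r)"
      using w c t by (intro ennreal_mult) auto
    also have "\<dots> \<le> ennreal ?w * log_profile c r t"
      unfolding log_profile_def using True t by (intro mult_left_mono) auto
    finally show ?thesis .
  next
    case False
    have "emeasure lborel ?S \<le> emeasure lborel (ball x0 r)" by (intro emeasure_mono) auto
    then have "ennreal (1/t) * emeasure lborel ?S \<le> ennreal (1/t) * ennreal ?w"
      using t by (intro mult_left_mono) (simp_all add: emeasure_ball)
    also have "\<dots> \<le> ennreal ?w * log_profile c r t"
      unfolding log_profile_def using False t by (simp add: mult.commute)
    finally show ?thesis .
  qed
qed

definition boundary_layer :: "('a::euclidean_space \<Rightarrow> 'a) \<Rightarrow> 'a \<Rightarrow> real \<Rightarrow> real \<Rightarrow> (real \<times> 'a) set" where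
  "boundary_layer \<phi> x0 r c = {p. 0 < fst p \<and> fst p \<le> r \<and> dist x0 (\<phi> (snd p)) < r
     \<and> r - c * fst p / DIM('a) \<le> dist x0 (\<phi> (snd p))}"

lemma boundary_layer_sets:
  assumes "bi_lipschitz_homeo \<phi>"
  shows "boundary_layer \<phi> x0 r c \<in> sets lborel"
proof -
  note [measurable] = bi_lipschitz_borel_measurable[OF assms]
  have "boundary_layer \<phi> x0 r c \<in> sets borel" unfolding boundary_layer_def by measurable
  then show ?thesis by simp
qed

lemma boundary_layer_slice_le_log_profile:
  fixes \<phi> :: "'a::euclidean_space \<Rightarrow> 'a"
  assumes bl: "bi_lipschitz_homeo \<phi>" and pl: "preserves_lebesgue \<phi>" and c: "c > 0"
  shows "ennreal (1/t) * (\<integral>\<^sup>+y. indicator (boundary_layer \<phi> x0 r c) (t, y) \<partial>lborel)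
    \<le> ennreal (unit_ball_vol DIM('a) * r ^ DIM('a)) * log_profile c r t"
proof (cases "0 < t \<and> t \<le> r")
  case True
  define S where "S = {x. dist x0 x < r \<and> r - c * t / DIM('a) \<le> dist x0 x}"
  have "S = ball x0 r - ball x0 (r - c * t / DIM('a))" unfolding S_def by auto
  then have S: "S \<in> sets borel" by simp
  have "indicator (boundary_layer \<phi> x0 r c) (t, y) = indicator (\<phi> -` S) y" for y
    unfolding boundary_layer_def S_def using True by (simp add: indicator_def)
  then have "(\<integral>\<^sup>+y. indicator (boundary_layer \<phi> x0 r c) (t, y) \<partial>lborel)
      = (\<integral>\<^sup>+y. indicator (\<phi> -` S) y \<partial>lborel)"
    by (intro nn_integral_cong) simp
  also have "\<dots> = emeasure lborel (\<phi> -` S)"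
    using measurable_sets_borel[OF bi_lipschitz_borel_measurable[OF bl] S] by simp
  also have "\<dots> = emeasure lborel S" by (rule emeasure_lborel_vimage[OF bl pl S])
  finally have "(\<integral>\<^sup>+y. indicator (boundary_layer \<phi> x0 r c) (t, y) \<partial>lborel) = emeasure lborel S" .
  then show ?thesis
    unfolding S_def using True c by (simp add: annulus_over_height_le_log_profile)
qed (auto simp: boundary_layer_def indicator_def)

lemma nn_integral_boundary_layer_le:
  fixes \<phi> :: "'a::euclidean_space \<Rightarrow> 'a" and \<beta> :: "real \<Rightarrow> 'a \<Rightarrow> real"
  assumes bl: "bi_lipschitz_homeo \<phi>" and pl: "preserves_lebesgue \<phi>" and lb: "Linfty \<beta>"
    and r: "r > 0" and c: "c \<ge> 1"
  shows "(\<integral>\<^sup>+p. mu_beta_density \<beta> p * indicator (boundary_layer \<phi> x0 r c) p \<partial>lborel)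
     \<le> ennreal ((Linfty_norm \<beta>)\<^sup>2 * (unit_ball_vol DIM('a) * r ^ DIM('a)) * (1 + ln c))"
proof -
  define b where "b = Linfty_norm \<beta>"
  define w where "w = unit_ball_vol DIM('a) * r ^ DIM('a)"
  let ?L = "boundary_layer \<phi> x0 r c"
  have "?L \<subseteq> upper_half_space" by (auto simp: boundary_layer_def upper_half_space_def)
  then have L: "?L \<inter> upper_half_space = ?L" by blast
  have "(\<lambda>p::real \<times> 'a. ennreal (b\<^sup>2 / fst p) * indicator ?L p) \<in> borel_measurable (lborel \<Otimes>\<^sub>M lborel)"
    using boundary_layer_sets[OF bl] unfolding lborel_prod by measurable
  note Tonelli = lborel.nn_integral_fst[OF this, unfolded lborel_prod]
  have "(\<integral>\<^sup>+p. mu_beta_density \<beta> p * indicator ?L p \<partial>lborel)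
      \<le> (\<integral>\<^sup>+p. ennreal (b\<^sup>2 / fst p) * indicator ?L p \<partial>lborel)"
    using nn_integral_mu_beta_density_le[OF lb, of ?L] unfolding L b_def .
  also have "\<dots> = (\<integral>\<^sup>+t. ennreal (b\<^sup>2) * (ennreal (1/t) * (\<integral>\<^sup>+y. indicator ?L (t, y) \<partial>lborel)) \<partial>lborel)"
    unfolding Tonelli[symmetric] using boundary_layer_sets[OF bl]
    by (intro nn_integral_cong)
      (simp add: nn_integral_cmult ennreal_mult'[symmetric] mult.assoc[symmetric])
  also have "\<dots> \<le> (\<integral>\<^sup>+t. ennreal (b\<^sup>2 * w) * log_profile c r t \<partial>lborel)"
    using boundary_layer_slice_le_log_profile[OF bl pl] c unfolding w_def
    by (intro nn_integral_mono) (simp add: ennreal_mult' mult.assoc mult_left_mono)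
  also have "\<dots> = ennreal (b\<^sup>2 * w) * ennreal (1 + ln c)"
    using r c by (subst nn_integral_cmult) (auto simp: nn_integral_log_profile)
  also have "\<dots> = ennreal (b\<^sup>2 * w * (1 + ln c))"
    using c by (intro ennreal_mult''[symmetric]) auto
  finally show ?thesis unfolding b_def w_def .
qed

subsection \<open>The interior region\<close>

text \<open>
  Integrating this weight in z averages the Carleson boxes T(B(z, h z/3)); the normalisation uses
  the radius h z/5, which is comparable to h y for z near y because h is 1-Lipschitz.
\<close>

definition box_average_weight :: "('a::euclidean_space \<Rightarrow> real) \<Rightarrow> 'a \<Rightarrow> real \<times> 'a \<Rightarrow> ennreal" where
  "box_average_weight h z p = (if 0 < h z \<and> p \<in> carleson_box z (h z / 3)
     then ennreal (1 / (unit_ball_vol DIM('a) * (h z / 5) ^ DIM('a))) else 0)"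

lemma box_average_weight_measurable[measurable]:
  assumes [measurable]: "h \<in> borel_measurable lborel"
  shows "(\<lambda>(z, p). box_average_weight h z p) \<in> borel_measurable (lborel \<Otimes>\<^sub>M lborel)"
  unfolding box_average_weight_def mem_carleson_box by measurable

lemma nn_integral_box_average_weight_ge_one:
  fixes h :: "'a::euclidean_space \<Rightarrow> real"
  assumes lip: "\<And>y z. h y \<le> h z + dist y z" and t: "0 < t" "4 * t < h y"
  shows "1 \<le> (\<integral>\<^sup>+z. box_average_weight h z (t, y) \<partial>lborel)"
proof -
  define om where "om = unit_ball_vol (real DIM('a))"
  define \<rho> where "\<rho> = h y / 4"
  have om: "om > 0" unfolding om_def by (rule unit_ball_vol_pos) simp
  have \<rho>: "\<rho> > 0" "t < \<rho>" using t unfolding \<rho>_def by auto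
  have "ennreal (1 / (om * \<rho> ^ DIM('a))) * indicator (ball y \<rho>) z \<le> box_average_weight h z (t, y)"
    for z
  proof (cases "z \<in> ball y \<rho>")
    case True
    then have h: "3 * \<rho> < h z" "h z < 5 * \<rho>"
      using lip[of y z] lip[of z y] unfolding \<rho>_def by (auto simp: dist_commute)
    then have "(h z / 5) ^ DIM('a) \<le> \<rho> ^ DIM('a)" using \<rho> by (intro power_mono) auto
    moreover have "0 < om * (h z / 5) ^ DIM('a)" using om h \<rho> by simp
    ultimately have "1 / (om * \<rho> ^ DIM('a)) \<le> 1 / (om * (h z / 5) ^ DIM('a))"
      using om \<rho> by (intro divide_left_mono) auto
    with True h \<rho> t show ?thesis
      unfolding box_average_weight_def mem_carleson_box om_def
      by (auto simp: dist_commute intro: ennreal_leI)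
  qed simp
  then have "(\<integral>\<^sup>+z. ennreal (1 / (om * \<rho> ^ DIM('a))) * indicator (ball y \<rho>) z \<partial>lborel)
      \<le> (\<integral>\<^sup>+z. box_average_weight h z (t, y) \<partial>lborel)"
    by (intro nn_integral_mono)
  moreover have "emeasure lborel (ball y \<rho>) = ennreal (om * \<rho> ^ DIM('a))"
    using \<rho> by (simp add: emeasure_ball om_def)
  then have "(\<integral>\<^sup>+z. ennreal (1 / (om * \<rho> ^ DIM('a))) * indicator (ball y \<rho>) z \<partial>lborel) = 1"
    using \<rho> om by (simp add: nn_integral_cmult_indicator ennreal_mult'[symmetric])
  ultimately show ?thesis by simp
qed

lemma nn_integral_box_average_weight_le:
  fixes \<beta> :: "real \<Rightarrow> 'a::euclidean_space \<Rightarrow> real"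
  assumes lb: "Linfty \<beta>"
  shows "(\<integral>\<^sup>+p. mu_beta_density \<beta> p * box_average_weight h z p \<partial>lborel)
    \<le> carleson_norm (mu_beta \<beta>) * ennreal ((5/3) ^ DIM('a)) * indicator {z. 0 < h z} z"
proof (cases "0 < h z")
  case True
  define R where "R = h z / 3"
  define c where "c = 1 / (unit_ball_vol DIM('a) * (h z / 5) ^ DIM('a))"
  have om: "unit_ball_vol (real DIM('a)) > 0" by (rule unit_ball_vol_pos) simp
  have "R > 0" "c > 0" using True om unfolding R_def c_def by simp_all
  have ratio: "1 / (v * (h z / 5) ^ n) * (v * (h z / 3) ^ n) = (5/3) ^ n" if "v > 0" for v :: real and n
    using that True by (simp add: field_simps power_divide)
  have "(\<integral>\<^sup>+p. mu_beta_density \<beta> p * box_average_weight h z p \<partial>lborel)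
      = (\<integral>\<^sup>+p. ennreal c * (mu_beta_density \<beta> p * indicator (carleson_box z R) p) \<partial>lborel)"
    using True by (intro nn_integral_cong) (simp add: box_average_weight_def c_def R_def mult.commute)
  also have "\<dots> = ennreal c * (\<integral>\<^sup>+p. mu_beta_density \<beta> p * indicator (carleson_box z R) p \<partial>lborel)"
    using lb by (intro nn_integral_cmult) measurable
  also have "\<dots> = ennreal c * emeasure (mu_beta \<beta>) (carleson_box z R)"
    using emeasure_mu_beta[OF lb carleson_box_sets[of z R]]
      Int_absorb2[OF carleson_box_subset_upper_half_space[of z R]] by simp
  also have "\<dots> \<le> ennreal c * (carleson_norm (mu_beta \<beta>)
      * ennreal (unit_ball_vol DIM('a) * R ^ DIM('a)))"
    using \<open>R > 0\<close> by (intro mult_left_mono emeasure_carleson_box_le) auto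
  also have "\<dots> = carleson_norm (mu_beta \<beta>) * ennreal (c * (unit_ball_vol DIM('a) * R ^ DIM('a)))"
    using \<open>c > 0\<close> by (simp add: ennreal_mult' mult_ac)
  also have "c * (unit_ball_vol DIM('a) * R ^ DIM('a)) = (5/3) ^ DIM('a)"
    unfolding c_def R_def using ratio[OF om] .
  finally show ?thesis using True by simp
qed (simp add: box_average_weight_def)

lemma nn_integral_below_lipschitz_graph_le:
  fixes h :: "'a::euclidean_space \<Rightarrow> real" and \<beta> :: "real \<Rightarrow> 'a \<Rightarrow> real"
  assumes lb: "Linfty \<beta>" and hm[measurable]: "h \<in> borel_measurable lborel"
    and lip: "\<And>y z. h y \<le> h z + dist y z"
  shows "(\<integral>\<^sup>+p. mu_beta_density \<beta> p * indicator {p. 4 * fst p < h (snd p)} p \<partial>lborel)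
    \<le> carleson_norm (mu_beta \<beta>) * ennreal ((5/3) ^ DIM('a)) * emeasure lborel {z. 0 < h z}"
proof -
  let ?W = "box_average_weight h" and ?N = "carleson_norm (mu_beta \<beta>) * ennreal ((5/3) ^ DIM('a))"
  have "(\<lambda>x. mu_beta_density \<beta> (snd x))
      \<in> borel_measurable (lborel \<Otimes>\<^sub>M (lborel :: (real \<times> 'a) measure) :: ('a \<times> _) measure)"
    using lb by measurable
  then have fm: "(\<lambda>(z, p). mu_beta_density \<beta> p * ?W z p) \<in> borel_measurable (lborel \<Otimes>\<^sub>M lborel)"
    using box_average_weight_measurable[OF hm] by (simp add: case_prod_beta')
  have "mu_beta_density \<beta> p * indicator {p. 4 * fst p < h (snd p)} p
      \<le> (\<integral>\<^sup>+z. mu_beta_density \<beta> p * ?W z p \<partial>lborel)" for p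
  proof (cases "0 < fst p \<and> 4 * fst p < h (snd p)")
    case True
    then have "mu_beta_density \<beta> p * 1 \<le> mu_beta_density \<beta> p * (\<integral>\<^sup>+z. ?W z p \<partial>lborel)"
      using nn_integral_box_average_weight_ge_one[OF lip, of "fst p" "snd p"]
      by (intro mult_left_mono) auto
    also have "\<dots> = (\<integral>\<^sup>+z. mu_beta_density \<beta> p * ?W z p \<partial>lborel)"
      using measurable_Pair2[OF box_average_weight_measurable[OF hm]]
      by (subst nn_integral_cmult) auto
    finally show ?thesis by (simp add: indicator_def)
  qed (auto simp: mu_beta_density_def upper_half_space_def indicator_def)
  then have "(\<integral>\<^sup>+p. mu_beta_density \<beta> p * indicator {p. 4 * fst p < h (snd p)} p \<partial>lborel)
      \<le> (\<integral>\<^sup>+p. (\<integral>\<^sup>+z. mu_beta_density \<beta> p * ?W z p \<partial>lborel) \<partial>lborel)"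
    by (intro nn_integral_mono)
  also have "\<dots> = (\<integral>\<^sup>+z. (\<integral>\<^sup>+p. mu_beta_density \<beta> p * ?W z p \<partial>lborel) \<partial>lborel)"
    by (rule lborel_pair.Fubini'[OF fm])
  also have "\<dots> \<le> (\<integral>\<^sup>+z. ?N * indicator {z. 0 < h z} z \<partial>lborel)"
    by (intro nn_integral_mono nn_integral_box_average_weight_le[OF lb])
  also have "\<dots> = ?N * emeasure lborel {z. 0 < h z}"
    by (rule nn_integral_cmult_indicator) measurable
  finally show ?thesis .
qed

lemma nn_integral_interior_le:
  fixes \<phi> :: "'a::euclidean_space \<Rightarrow> 'a" and \<beta> :: "real \<Rightarrow> 'a \<Rightarrow> real"
  assumes bl: "bi_lipschitz_homeo \<phi>" and pl: "preserves_lebesgue \<phi>" and lb: "Linfty \<beta>"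
    and r: "r > 0"
  shows "(\<integral>\<^sup>+p. mu_beta_density \<beta> p
            * indicator {p. 4 * fst p < (r - dist x0 (\<phi> (snd p))) / K_const \<phi>} p \<partial>lborel)
     \<le> carleson_norm (mu_beta \<beta>) * ennreal ((5/3) ^ DIM('a)) * ennreal (unit_ball_vol DIM('a) * r ^ DIM('a))"
proof -
  define K where "K = K_const \<phi>"
  define h where "h = (\<lambda>y. (r - dist x0 (\<phi> y)) / K)"
  have K2: "K \<ge> 2" unfolding K_def by (rule K_const_ge_two[OF bl])
  have [measurable]: "\<phi> \<in> borel_measurable lborel" using bi_lipschitz_borel_measurable[OF bl] by simp
  have "h \<in> borel_measurable lborel" unfolding h_def by measurable
  moreover have "h y \<le> h z + dist y z" for y z
  proof -
    have "dist x0 (\<phi> z) \<le> dist x0 (\<phi> y) + K * dist y z"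
      using dist_triangle[of x0 "\<phi> z" "\<phi> y"] dist_le_K_const[OF bl, of y z]
      unfolding K_def by (simp add: dist_commute)
    then have "(r - dist x0 (\<phi> y)) / K \<le> (r - dist x0 (\<phi> z) + K * dist y z) / K"
      using K2 by (intro divide_right_mono) auto
    then show ?thesis unfolding h_def using K2 by (simp add: add_divide_distrib)
  qed
  ultimately have "(\<integral>\<^sup>+p. mu_beta_density \<beta> p * indicator {p. 4 * fst p < h (snd p)} p \<partial>lborel)
      \<le> carleson_norm (mu_beta \<beta>) * ennreal ((5/3) ^ DIM('a)) * emeasure lborel {z. 0 < h z}"
    by (rule nn_integral_below_lipschitz_graph_le[OF lb])
  moreover have "{z. 0 < h z} = \<phi> -` ball x0 r"
    unfolding h_def using K2 by (auto simp: zero_less_divide_iff dist_commute)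
  ultimately show ?thesis
    using emeasure_lborel_vimage[OF bl pl, of "ball x0 r"] r
    by (simp add: h_def K_def emeasure_ball)
qed

subsection \<open>The Carleson norm of the pull-back\<close>

lemma emeasure_pullback_carleson_box_le:
  fixes \<phi> :: "'a::euclidean_space \<Rightarrow> 'a" and \<beta> :: "real \<Rightarrow> 'a \<Rightarrow> real"
  assumes bl: "bi_lipschitz_homeo \<phi>" and pl: "preserves_lebesgue \<phi>" and lb: "Linfty \<beta>"
    and r: "r > 0"
  shows "emeasure (pullback (mu_beta \<beta>) \<phi>) (carleson_box x0 r) \<le>
    (ennreal ((Linfty_norm \<beta>)\<^sup>2 * (1 + ln (4 * real DIM('a) * K_const \<phi>)))
      + carleson_norm (mu_beta \<beta>) * ennreal ((5/3) ^ DIM('a)))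
    * ennreal (unit_ball_vol DIM('a) * r ^ DIM('a))"
proof -
  define K where "K = K_const \<phi>"
  define c where "c = 4 * real DIM('a) * K"
  define w where "w = unit_ball_vol DIM('a) * r ^ DIM('a)"
  note [measurable] = bi_lipschitz_borel_measurable[OF bl]
  have K2: "K \<ge> 2" unfolding K_def by (rule K_const_ge_two[OF bl])
  have c: "c \<ge> 1" unfolding c_def K_def by (rule one_le_four_DIM_K_const[OF bl])
  define P where "P = {p::real\<times>'a. \<phi> (snd p) \<in> ball x0 r \<and> fst p \<le> r}"
  define I where "I = {p::real \<times> 'a. 4 * fst p < (r - dist x0 (\<phi> (snd p))) / K}"
  have "P \<in> sets borel" unfolding P_def by measurable
  moreover have "I \<in> sets borel" unfolding I_def by measurable
  ultimately have sets: "P \<in> sets lborel" "boundary_layer \<phi> x0 r c \<in> sets lborel" "I \<in> sets lborel"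
    using boundary_layer_sets[OF bl] by simp_all
  have layer_or_interior: "p \<in> boundary_layer \<phi> x0 r c \<or> p \<in> I" if "p \<in> P" "0 < fst p" for p
    using that K2 by (auto simp: P_def I_def boundary_layer_def c_def pos_less_divide_eq mult_ac)
  have cover: "mu_beta_density \<beta> p * indicator P p \<le> mu_beta_density \<beta> p
      * indicator (boundary_layer \<phi> x0 r c) p + mu_beta_density \<beta> p * indicator I p" for p
    using layer_or_interior[of p]
    by (cases "0 < fst p") (auto simp: indicator_def mu_beta_density_def upper_half_space_def)
  have "emeasure (pullback (mu_beta \<beta>) \<phi>) (carleson_box x0 r)
      = (\<integral>\<^sup>+p. mu_beta_density \<beta> p * indicator P p \<partial>lborel)"
    unfolding emeasure_pullback_carleson_box[OF bl] P_def[symmetric]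
    using sets by (intro emeasure_mu_beta[OF lb])
  also have "\<dots> \<le> (\<integral>\<^sup>+p. mu_beta_density \<beta> p * indicator (boundary_layer \<phi> x0 r c) p
      + mu_beta_density \<beta> p * indicator I p \<partial>lborel)"
    using cover by (intro nn_integral_mono)
  also have "\<dots> = (\<integral>\<^sup>+p. mu_beta_density \<beta> p * indicator (boundary_layer \<phi> x0 r c) p \<partial>lborel)
      + (\<integral>\<^sup>+p. mu_beta_density \<beta> p * indicator I p \<partial>lborel)"
    using sets lb by (intro nn_integral_add) auto
  also have "\<dots> \<le> ennreal ((Linfty_norm \<beta>)\<^sup>2 * w * (1 + ln c))
      + carleson_norm (mu_beta \<beta>) * ennreal ((5/3) ^ DIM('a)) * ennreal w"
    unfolding w_def I_def K_def
    by (intro add_mono nn_integral_boundary_layer_le[OF bl pl lb r c] nn_integral_interior_le[OF bl pl lb r])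
  also have "\<dots> = (ennreal ((Linfty_norm \<beta>)\<^sup>2 * (1 + ln c))
      + carleson_norm (mu_beta \<beta>) * ennreal ((5/3) ^ DIM('a))) * ennreal w"
  proof -
    have "w \<ge> 0" unfolding w_def using r by simp
    with c have "ennreal ((Linfty_norm \<beta>)\<^sup>2 * w * (1 + ln c))
        = ennreal ((Linfty_norm \<beta>)\<^sup>2 * (1 + ln c)) * ennreal w"
      by (simp add: ennreal_mult[symmetric] mult_ac)
    then show ?thesis by (simp add: distrib_right)
  qed
  finally show ?thesis unfolding w_def c_def K_def .
qed

lemma carleson_norm_pullback_le:
  fixes \<phi> :: "'a::euclidean_space \<Rightarrow> 'a" and \<beta> :: "real \<Rightarrow> 'a \<Rightarrow> real"
  assumes bl: "bi_lipschitz_homeo \<phi>" and pl: "preserves_lebesgue \<phi>" and lb: "Linfty \<beta>"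
  shows "carleson_norm (pullback (mu_beta \<beta>) \<phi>)
    \<le> ennreal ((Linfty_norm \<beta>)\<^sup>2 * (1 + ln (4 * real DIM('a) * K_const \<phi>)))
      + carleson_norm (mu_beta \<beta>) * ennreal ((5/3) ^ DIM('a))"
    (is "_ \<le> ?X")
  unfolding carleson_norm_def[of "pullback (mu_beta \<beta>) \<phi>"]
proof (rule SUP_least)
  fix p :: "'a \<times> real" assume "p \<in> {p. snd p > 0}"
  then have r: "snd p > 0" by simp
  define w where "w = unit_ball_vol (real DIM('a)) * snd p ^ DIM('a)"
  have "w > 0" unfolding w_def using r unit_ball_vol_pos[of "real DIM('a)"] by simp
  have "emeasure (pullback (mu_beta \<beta>) \<phi>) (carleson_box (fst p) (snd p)) / ennreal w
      \<le> ?X * ennreal w / ennreal w"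
    unfolding w_def
    by (intro divide_right_mono_ennreal emeasure_pullback_carleson_box_le[OF bl pl lb r])
  also have "\<dots> = ?X" using \<open>w > 0\<close> by (intro mult_divide_eq_ennreal) auto
  finally show "emeasure (pullback (mu_beta \<beta>) \<phi>) (carleson_box (fst p) (snd p))
      / emeasure lborel (ball (fst p) (snd p)) \<le> ?X"
    using r by (simp add: emeasure_ball w_def)
qed

lemma one_plus_ln_mult_le:
  fixes c K :: real
  assumes c: "c \<ge> 1" and K: "K \<ge> 2"
  shows "1 + ln (c * K) \<le> ((1 + ln c) / ln 2 + 1) * ln K"
proof -
  have "1 + ln (c * K) = (1 + ln c) / ln 2 * ln 2 + ln K"
    using c K by (simp add: ln_mult)
  also have "\<dots> \<le> (1 + ln c) / ln 2 * ln K + ln K"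
    using c K by (intro add_right_mono mult_left_mono) auto
  finally show ?thesis by (simp add: algebra_simps)
qed

definition pullback_constant :: "nat \<Rightarrow> real" where
  "pullback_constant d = max ((5/3) ^ d) ((1 + ln (4 * real d)) / ln 2 + 1)"

lemma pullback_constant_pos: "pullback_constant d > 0"
  by (simp add: pullback_constant_def less_max_iff_disj)

lemma carleson_norm_pullback_le_pullback_constant:
  fixes \<phi> :: "'a::euclidean_space \<Rightarrow> 'a" and \<beta> :: "real \<Rightarrow> 'a \<Rightarrow> real"
  assumes bl: "bi_lipschitz_homeo \<phi>" and pl: "preserves_lebesgue \<phi>" and lb: "Linfty \<beta>"
  shows "carleson_norm (pullback (mu_beta \<beta>) \<phi>) \<le> ennreal (pullback_constant DIM('a))
    * (carleson_norm (mu_beta \<beta>) + ennreal (ln (K_const \<phi>) * (Linfty_norm \<beta>)\<^sup>2))"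
proof -
  define C where "C = pullback_constant DIM('a)"
  define d where "d = 4 * real DIM('a)"
  have "real DIM('a) \<ge> 1" by (simp add: DIM_positive Suc_le_eq)
  then have d: "d \<ge> 1" unfolding d_def by linarith
  have K: "K_const \<phi> \<ge> 2" by (rule K_const_ge_two[OF bl])
  then have lnK: "ln (K_const \<phi>) \<ge> 0" by simp
  have "1 + ln (d * K_const \<phi>) \<le> C * ln (K_const \<phi>)"
    using one_plus_ln_mult_le[OF d K]
      mult_right_mono[OF max.cobounded2[of "(1 + ln d) / ln 2 + 1" "(5/3) ^ DIM('a)"] lnK]
    unfolding C_def pullback_constant_def d_def by linarith
  then have "(Linfty_norm \<beta>)\<^sup>2 * (1 + ln (d * K_const \<phi>))
      \<le> C * (ln (K_const \<phi>) * (Linfty_norm \<beta>)\<^sup>2)"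
    by (metis mult.assoc mult.commute mult_left_mono zero_le_power2)
  then have log: "ennreal ((Linfty_norm \<beta>)\<^sup>2 * (1 + ln (d * K_const \<phi>)))
      \<le> ennreal C * ennreal (ln (K_const \<phi>) * (Linfty_norm \<beta>)\<^sup>2)"
    using pullback_constant_pos[of "DIM('a)"]
    by (simp add: C_def ennreal_mult'[symmetric] ennreal_leI)
  have "carleson_norm (mu_beta \<beta>) * ennreal ((5/3) ^ DIM('a))
      \<le> carleson_norm (mu_beta \<beta>) * ennreal C"
    unfolding C_def pullback_constant_def by (intro mult_left_mono ennreal_leI) auto
  then have five: "carleson_norm (mu_beta \<beta>) * ennreal ((5/3) ^ DIM('a))
      \<le> ennreal C * carleson_norm (mu_beta \<beta>)"
    by (metis mult.commute)
  from order_trans[OF carleson_norm_pullback_le[OF bl pl lb] add_mono[OF log[unfolded d_def] five]]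
  show ?thesis unfolding C_def by (simp add: distrib_left add.commute)
qed

theorem theorem2p7:
  "\<exists>C::real. C > 0 \<and>
    (\<forall>(\<phi>::'a::euclidean_space \<Rightarrow> 'a) (\<beta>::real \<Rightarrow> 'a \<Rightarrow> real).
      bi_lipschitz_homeo \<phi> \<and> preserves_lebesgue \<phi> \<and> Linfty \<beta> \<and> is_carleson (mu_beta \<beta>) \<longrightarrow>
        is_carleson (pullback (mu_beta \<beta>) \<phi>) \<and>
        carleson_norm (pullback (mu_beta \<beta>) \<phi>) \<le>
          ennreal C * (carleson_norm (mu_beta \<beta>)
                       + ennreal (ln (K_const \<phi>) * (Linfty_norm \<beta>)\<^sup>2)))"
proof (intro exI[of _ "pullback_constant DIM('a)"] conjI allI impI pullback_constant_pos)
  fix \<phi> :: "'a \<Rightarrow> 'a" and \<beta> :: "real \<Rightarrow> 'a \<Rightarrow> real"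
  assume "bi_lipschitz_homeo \<phi> \<and> preserves_lebesgue \<phi> \<and> Linfty \<beta> \<and> is_carleson (mu_beta \<beta>)"
  then have bound: "carleson_norm (pullback (mu_beta \<beta>) \<phi>) \<le> ennreal (pullback_constant DIM('a))
      * (carleson_norm (mu_beta \<beta>) + ennreal (ln (K_const \<phi>) * (Linfty_norm \<beta>)\<^sup>2))"
    and "carleson_norm (mu_beta \<beta>) < \<infinity>"
    using carleson_norm_pullback_le_pullback_constant unfolding is_carleson_def by blast+
  then show "is_carleson (pullback (mu_beta \<beta>) \<phi>)"
    unfolding is_carleson_def by (auto simp: ennreal_mult_less_top elim: le_less_trans)
  show "carleson_norm (pullback (mu_beta \<beta>) \<phi>) \<le> ennreal (pullback_constant DIM('a))
      * (carleson_norm (mu_beta \<beta>) + ennreal (ln (K_const \<phi>) * (Linfty_norm \<beta>)\<^sup>2))"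
    by (rule bound)
qed

end
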